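(* Let $\mathcal{Y}$ be a finite set of labels and let $\Omega$ be a countable set of model parameters (ensemble members) equipped with a probability distribution $p(\omega \mid \mathcal{D})$. For each $\omega \in \Omega$ and input $x$, let $p(y \mid x, \omega)$ be a probability distribution on $\mathcal{Y}$. Let $x_1, x_2$ be two inputs with corresponding label random variables $Y_1, Y_2$, and let $\delta \ge 0$ and $\epsilon \ge 0$. Suppose that $$I(Y_1; \omega \mid x_1, \mathcal{D}) > I(Y_2; \omega \mid x_2, \mathcal{D}) + \delta$$ and $$\left| H(Y_1 \mid x_1, \mathcal{D}) - H(Y_2 \mid x_2, \mathcal{D}) \right| \le \epsilon .$$ Then there exists a set $\Omega' \subseteq \Omega$ with $p(\Omega' \mid \mathcal{D}) > 0$ such that for every $\omega' \in \Omega'$, $$H(Y_1 \mid x_1, \omega') < H(Y_2 \mid x_2, \omega') - (\delta - \epsilon).$$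
   Context: The predictive distribution of the ensemble is $p(y \mid x, \mathcal{D}) = \mathbb{E}_{p(\omega \mid \mathcal{D})}[p(y \mid x, \omega)]$. $H(Y \mid x, \mathcal{D})$ denotes the Shannon entropy of $p(\cdot \mid x, \mathcal{D})$ (predictive entropy), and $H(Y \mid x, \omega)$ denotes the Shannon entropy of $p(\cdot \mid x, \omega)$ (softmax entropy of ensemble member $\omega$). The mutual information (epistemic uncertainty) is $I(Y; \omega \mid x, \mathcal{D}) = H(Y \mid x, \mathcal{D}) - \mathbb{E}_{p(\omega \mid \mathcal{D})}[H(Y \mid x, \omega)]$. *)

theory Defs
  imports "HOL-Probability.Probability"
begin

definition shannon_entropy :: "'y::finite pmf \<Rightarrow> real" where
  "shannon_entropy p = - (\<Sum>y\<in>UNIV. if pmf p y = 0 then 0 else pmf p y * ln (pmf p y))"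

text \<open>Predictive distribution p(y | x, D) = E_{p(omega|D)} [p(y | x, omega)]:
  the mixture of the members' distributions under the posterior P.\<close>
definition predictive :: "'w pmf \<Rightarrow> ('x \<Rightarrow> 'w \<Rightarrow> 'y pmf) \<Rightarrow> 'x \<Rightarrow> 'y pmf" where
  "predictive P m x = bind_pmf P (\<lambda>w. m x w)"

definition pred_entropy :: "'w pmf \<Rightarrow> ('x \<Rightarrow> 'w \<Rightarrow> 'y::finite pmf) \<Rightarrow> 'x \<Rightarrow> real" where
  "pred_entropy P m x = shannon_entropy (predictive P m x)"

definition mutual_info :: "'w pmf \<Rightarrow> ('x \<Rightarrow> 'w \<Rightarrow> 'y::finite pmf) \<Rightarrow> 'x \<Rightarrow> real" where
  "mutual_info P m x =
     pred_entropy P m x - measure_pmf.expectation P (\<lambda>w. shannon_entropy (m x w))"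

end

theory Submission
  imports Defs
begin

text \<open>Subtracting the predictive entropies from the mutual informations shows that the expected
  member entropy at x2 exceeds the one at x1 by more than \<delta> - \<epsilon>.  A random variable whose mean
  exceeds a constant exceeds it with positive probability, which gives \<Omega>'.  Integrability is
  automatic because entropies on a finite label set are bounded.\<close>

lemma entropy_term_bounds:
  fixes t :: real
  assumes "0 \<le> t" "t \<le> 1"
  shows "(if t = 0 then 0 else t * ln t) \<le> 0"
    and "t - 1 \<le> (if t = 0 then 0 else t * ln t)"
proof -
  show "(if t = 0 then 0 else t * ln t) \<le> 0"
    using assms by (simp add: mult_nonneg_nonpos)
  show "t - 1 \<le> (if t = 0 then 0 else t * ln t)"
  proof (cases "t = 0")
    case False
    with assms have "t > 0" by simp
    have "1 - 1 / t \<le> ln t"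
      using ln_le_minus_one[of "1 / t"] \<open>t > 0\<close> by (simp add: ln_div)
    then have "t * (1 - 1 / t) \<le> t * ln t"
      using \<open>t > 0\<close> by (simp add: mult_left_mono)
    moreover have "t * (1 - 1 / t) = t - 1"
      using \<open>t > 0\<close> by (simp add: field_simps)
    ultimately show ?thesis using False by simp
  qed simp
qed

lemma shannon_entropy_nonneg: "0 \<le> shannon_entropy (p :: 'y::finite pmf)"
  unfolding shannon_entropy_def
  by (simp add: sum_nonpos entropy_term_bounds(1) pmf_le_1)

lemma shannon_entropy_le_card: "shannon_entropy (p :: 'y::finite pmf) \<le> real CARD('y) - 1"
proof -
  have "(\<Sum>y\<in>UNIV. pmf p y - 1) \<le> (\<Sum>y\<in>UNIV. if pmf p y = 0 then 0 else pmf p y * ln (pmf p y))"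
    by (rule sum_mono) (simp add: entropy_term_bounds(2) pmf_le_1)
  moreover have "(\<Sum>y\<in>UNIV. pmf p y - 1) = 1 - real CARD('y)"
    by (simp add: sum_subtractf sum_pmf_eq_1)
  ultimately show ?thesis
    unfolding shannon_entropy_def by linarith
qed

lemma integrable_shannon_entropy:
  "integrable (measure_pmf P) (\<lambda>w. shannon_entropy (f w :: 'y::finite pmf))"
proof (rule measure_pmf.integrable_const_bound[where B = "real CARD('y)"])
  have "\<bar>shannon_entropy (q :: 'y pmf)\<bar> \<le> real CARD('y)" for q
    using shannon_entropy_nonneg[of q] shannon_entropy_le_card[of q] by linarith
  then show "AE w in measure_pmf P. norm (shannon_entropy (f w)) \<le> real CARD('y)"
    by simp
qed simp

lemma measure_pmf_prob_less_pos:
  fixes f g :: "'a \<Rightarrow> real"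
  assumes "integrable (measure_pmf P) f" "integrable (measure_pmf P) g"
    and "measure_pmf.expectation P f < measure_pmf.expectation P g"
  shows "measure_pmf.prob P {w. f w < g w} > 0"
proof (rule ccontr)
  assume "\<not> ?thesis"
  then have "measure_pmf.prob P {w. f w < g w} = 0"
    by (simp add: measure_nonneg order.antisym)
  then have "set_pmf P \<inter> {w. f w < g w} = {}"
    by (simp add: measure_pmf_zero_iff)
  then have "AE w in measure_pmf P. g w \<le> f w"
    by (auto simp: AE_measure_pmf_iff not_less[symmetric])
  then have "measure_pmf.expectation P g \<le> measure_pmf.expectation P f"
    using assms(1,2) by (intro integral_mono_AE) auto
  with assms(3) show False by linarith
qed

theorem mainTheorem1:
  fixes P :: "'w::countable pmf"
    and m :: "'x \<Rightarrow> 'w \<Rightarrow> 'y::finite pmf"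
    and x1 x2 :: 'x
    and \<delta> \<epsilon> :: real
  assumes "\<delta> \<ge> 0" and "\<epsilon> \<ge> 0"
    and "mutual_info P m x1 > mutual_info P m x2 + \<delta>"
    and "\<bar>pred_entropy P m x1 - pred_entropy P m x2\<bar> \<le> \<epsilon>"
  shows "\<exists>\<Omega>'. measure_pmf.prob P \<Omega>' > 0 \<and>
           (\<forall>w'\<in>\<Omega>'. shannon_entropy (m x1 w') < shannon_entropy (m x2 w') - (\<delta> - \<epsilon>))"
proof -
  let ?H1 = "\<lambda>w. shannon_entropy (m x1 w)" and ?H2 = "\<lambda>w. shannon_entropy (m x2 w)"
  have "measure_pmf.expectation P (\<lambda>w. ?H2 w - (\<delta> - \<epsilon>))
          = measure_pmf.expectation P ?H2 - (\<delta> - \<epsilon>)"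
    by (simp add: Bochner_Integration.integral_diff[OF integrable_shannon_entropy])
  also have "\<dots> > measure_pmf.expectation P ?H1"
    using assms(3,4) unfolding mutual_info_def by linarith
  finally have "measure_pmf.prob P {w. ?H1 w < ?H2 w - (\<delta> - \<epsilon>)} > 0"
    by (intro measure_pmf_prob_less_pos integrable_shannon_entropy
          Bochner_Integration.integrable_diff) auto
  then show ?thesis by blast
qed

end
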